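(* Let $X$ be a space and fix $x_0\in X$. Then $X$ is wep-connected if and only if for each $x\in X$ there is a path $p:I\to X$ from $x_0$ to $x$ such that for every open neighborhood $\mathcal U$ of $p$ in $P(X,x_0)$ there is an open neighborhood $V$ of $x$ in $X$ such that for every $v\in V$ there is a path $q\in\mathcal U$ from $x_0$ to $v$.
   Context: $P(X)$ is the space of paths $I=[0,1]\to X$ with the compact-open topology and $P(X,x_0)=\{\alpha\in P(X):\alpha(0)=x_0\}$ with the subspace topology. A path $p:I\to X$ is well-ended if for every open neighborhood $\mathcal U$ of $p$ in $P(X)$ there are open neighborhoods $V_0,V_1$ of $p(0),p(1)$ in $X$ such that for all $a\in V_0,b\in V_1$ there is $q\in\mathcal U$ with $q(0)=a$, $q(1)=b$. $X$ is wep-connected if any two points of $X$ are joined by a well-ended path in $X$. *)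

theory Defs
  imports "HOL-Analysis.Analysis"
begin

text \<open>Paths in an (abstract) topological space X: continuous maps from I = [0,1].
  Paths are represented as functions real => 'a; values outside [0,1] are irrelevant.\<close>
definition paths :: "'a topology \<Rightarrow> (real \<Rightarrow> 'a) set" where
  "paths X = {p. continuous_map (top_of_set {0..1}) X p}"

definition compact_open_paths :: "'a topology \<Rightarrow> (real \<Rightarrow> 'a) topology" where
  "compact_open_paths X =
     subtopology
       (topology_generated_by
          {{f. f ` K \<subseteq> U} | K U. compactin euclideanreal K \<and> K \<subseteq> {0..1} \<and> openin X U})
       (paths X)"

definition based_paths_top :: "'a topology \<Rightarrow> 'a \<Rightarrow> (real \<Rightarrow> 'a) topology" where
  "based_paths_top X x0 = subtopology (compact_open_paths X) {p \<in> paths X. p 0 = x0}"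

definition well_ended :: "'a topology \<Rightarrow> (real \<Rightarrow> 'a) \<Rightarrow> bool" where
  "well_ended X p \<longleftrightarrow>
     (\<forall>\<U>. openin (compact_open_paths X) \<U> \<and> p \<in> \<U> \<longrightarrow>
        (\<exists>V0 V1. openin X V0 \<and> openin X V1 \<and> p 0 \<in> V0 \<and> p 1 \<in> V1 \<and>
           (\<forall>a\<in>V0. \<forall>b\<in>V1. \<exists>q\<in>\<U>. q 0 = a \<and> q 1 = b)))"

definition wep_connected :: "'a topology \<Rightarrow> bool" where
  "wep_connected X \<longleftrightarrow>
     (\<forall>x\<in>topspace X. \<forall>y\<in>topspace X.
        \<exists>p\<in>paths X. p 0 = x \<and> p 1 = y \<and> well_ended X p)"

end

theory Submission
  imports Defs
begin

(* Call a path p from x0 "endpoint-movable" if every neighbourhood of p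
   in P(X,x0) contains paths from x0 to all points near p 1.  A well-ended path starting at x0
   is endpoint-movable, because neighbourhoods in P(X,x0) are traces of neighbourhoods in P(X);
   this gives the forward direction.  Conversely, given endpoint-movable paths px (to x) and
   py (to y), the path "px backwards, then py" joins x to y, and it is well-ended: the
   reverse-join map is continuous for the compact-open topology at pairs of paths with a common
   start, so a neighbourhood of the joined path contains the joins of neighbourhoods of px and
   py, whose endpoints can be moved freely near x resp. y. *)

definition reverse_join :: "(real \<Rightarrow> 'a) \<Rightarrow> (real \<Rightarrow> 'a) \<Rightarrow> real \<Rightarrow> 'a" where
  "reverse_join f g t = (if t \<le> 1/2 then f (1 - 2*t) else g (2*t - 1))"

lemma reverse_join_endpoints [simp]:
  "reverse_join f g 0 = f 1" "reverse_join f g 1 = g 1"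
  by (simp_all add: reverse_join_def)

lemma reverse_join_paths:
  assumes f: "f \<in> paths X" and g: "g \<in> paths X" and start: "f 0 = g 0"
  shows "reverse_join f g \<in> paths X"
proof -
  let ?I = "top_of_set {0..1::real}"
  have first_half: "continuous_map (subtopology ?I {t \<in> topspace ?I. id t \<le> 1/2}) X (\<lambda>t. f (1 - 2*t))"
  proof -
    have "continuous_map (subtopology ?I {t \<in> topspace ?I. id t \<le> 1/2}) ?I (\<lambda>t. 1 - 2*t)"
      by (auto simp: continuous_map_in_subtopology subtopology_subtopology
               intro!: continuous_map_from_subtopology continuous_intros)
    with f show ?thesis
      using continuous_map_compose[of _ _ "\<lambda>t. 1 - 2*t" X f] by (simp add: paths_def o_def)
  qed
  have second_half: "continuous_map (subtopology ?I {t \<in> topspace ?I. 1/2 \<le> id t}) X (\<lambda>t. g (2*t - 1))"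
  proof -
    have "continuous_map (subtopology ?I {t \<in> topspace ?I. 1/2 \<le> id t}) ?I (\<lambda>t. 2*t - 1)"
      by (auto simp: continuous_map_in_subtopology subtopology_subtopology
               intro!: continuous_map_from_subtopology continuous_intros)
    with g show ?thesis
      using continuous_map_compose[of _ _ "\<lambda>t. 2*t - 1" X g] by (simp add: paths_def o_def)
  qed
  have "continuous_map ?I X (\<lambda>t. if id t \<le> (\<lambda>_. 1/2) t then f (1 - 2*t) else g (2*t - 1))"
  proof (rule continuous_map_cases_le)
    show "f (1 - 2*t) = g (2*t - 1)" if "id t = 1/2" for t
    proof -
      have "1 - 2*t = 0" "2*t - 1 = 0" using that by simp_all
      then show ?thesis using start by simp
    qed
  qed (use first_half second_half in \<open>simp_all add: continuous_map_from_subtopology\<close>)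
  then show ?thesis
    by (simp add: paths_def reverse_join_def[abs_def])
qed

definition compact_open_subbasis :: "'a topology \<Rightarrow> (real \<Rightarrow> 'a) set set" where
  "compact_open_subbasis X =
     {{f. f ` K \<subseteq> U} | K U. compactin euclideanreal K \<and> K \<subseteq> {0..1} \<and> openin X U}"

lemma compact_open_paths_eq:
  "compact_open_paths X = subtopology (topology_generated_by (compact_open_subbasis X)) (paths X)"
  by (simp add: compact_open_paths_def compact_open_subbasis_def)

lemma openin_compact_open_paths_subset: "openin (compact_open_paths X) W \<Longrightarrow> W \<subseteq> paths X"
  by (metis compact_open_paths_eq openin_subset topspace_subtopology le_inf_iff)

lemma openin_paths_mapping_into:
  assumes "compact K" "K \<subseteq> {0..1}" "openin X U"
  shows "openin (compact_open_paths X) ({f. f ` K \<subseteq> U} \<inter> paths X)"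
  unfolding compact_open_paths_eq openin_subtopology
  using assms by (auto simp: compact_open_subbasis_def intro!: topology_generated_by_Basis)

lemma openin_based_paths_top:
  "openin (based_paths_top X x0) \<U> \<longleftrightarrow>
     (\<exists>W. openin (compact_open_paths X) W \<and> \<U> = W \<inter> {p \<in> paths X. p 0 = x0})"
  by (simp add: based_paths_top_def openin_subtopology)

text \<open>The part of K in [0,1/2] is handled by px,
  the part in [1/2,1] by py; the common start takes care of the point 1/2.\<close>
lemma reverse_join_subbasic_continuous:
  assumes K: "compact K" "K \<subseteq> {0..1}" and U: "openin X U"
    and px: "px \<in> paths X" and py: "py \<in> paths X" and start: "px 0 = py 0"
    and into: "reverse_join px py ` K \<subseteq> U"
  shows "\<exists>Wx Wy. openin (compact_open_paths X) Wx \<and> openin (compact_open_paths X) Wy \<and>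
           px \<in> Wx \<and> py \<in> Wy \<and> (\<forall>qx\<in>Wx. \<forall>qy\<in>Wy. reverse_join qx qy ` K \<subseteq> U)"
proof -
  define K1 where "K1 = (\<lambda>t::real. 1 - 2*t) ` (K \<inter> {..1/2})"
  define K2 where "K2 = (\<lambda>t::real. 2*t - 1) ` (K \<inter> {1/2..})"
  have "compact K1" "compact K2"
    unfolding K1_def K2_def
    by (rule compact_continuous_image, intro continuous_intros, simp add: compact_Int_closed K(1))+
  moreover have "K1 \<subseteq> {0..1}" "K2 \<subseteq> {0..1}"
    using K(2) by (auto simp: K1_def K2_def)
  ultimately have opens: "openin (compact_open_paths X) ({f. f ` K1 \<subseteq> U} \<inter> paths X)"
                         "openin (compact_open_paths X) ({f. f ` K2 \<subseteq> U} \<inter> paths X)"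
    using openin_paths_mapping_into U by blast+
  have px_into: "px ` K1 \<subseteq> U"
  proof
    fix z assume "z \<in> px ` K1"
    then obtain t where t: "t \<in> K" "t \<le> 1/2" "z = px (1 - 2*t)" by (auto simp: K1_def)
    have "reverse_join px py t \<in> U" using into t(1) by blast
    then show "z \<in> U" using t by (simp add: reverse_join_def)
  qed
  have py_into: "py ` K2 \<subseteq> U"
  proof
    fix z assume "z \<in> py ` K2"
    then obtain t where t: "t \<in> K" "1/2 \<le> t" "z = py (2*t - 1)" by (auto simp: K2_def)
    have "reverse_join px py t \<in> U" using into t(1) by blast
    show "z \<in> U"
    proof (cases "t = 1/2")
      case True
      then have "z = py 0" "reverse_join px py t = px 0" using t(3) by (simp_all add: reverse_join_def True)
      with \<open>reverse_join px py t \<in> U\<close> start show ?thesis by simp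
    next
      case False
      with \<open>reverse_join px py t \<in> U\<close> t show ?thesis by (simp add: reverse_join_def)
    qed
  qed
  let ?Wx = "{f. f ` K1 \<subseteq> U} \<inter> paths X" and ?Wy = "{f. f ` K2 \<subseteq> U} \<inter> paths X"
  have "reverse_join qx qy ` K \<subseteq> U" if "qx \<in> ?Wx" "qy \<in> ?Wy" for qx qy
  proof -
    have "reverse_join qx qy t \<in> U" if "t \<in> K" for t
    proof (cases "t \<le> 1/2")
      case True
      then have "1 - 2*t \<in> K1" using \<open>t \<in> K\<close> unfolding K1_def by blast
      then have "qx (1 - 2*t) \<in> U" using \<open>qx \<in> ?Wx\<close> by blast
      then show ?thesis using True by (simp add: reverse_join_def)
    next
      case False
      then have "2*t - 1 \<in> K2" using \<open>t \<in> K\<close> unfolding K2_def by force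
      then have "qy (2*t - 1) \<in> U" using \<open>qy \<in> ?Wy\<close> by blast
      then show ?thesis using False by (simp add: reverse_join_def)
    qed
    then show ?thesis by blast
  qed
  moreover have "px \<in> ?Wx" "py \<in> ?Wy" using px_into py_into px py by blast+
  ultimately show ?thesis using opens by (intro exI[of _ ?Wx] exI[of _ ?Wy]) simp
qed

lemma reverse_join_generated_continuous:
  assumes T: "generate_topology_on (compact_open_subbasis X) T"
    and px: "px \<in> paths X" and py: "py \<in> paths X" and start: "px 0 = py 0"
  shows "reverse_join px py \<in> T \<Longrightarrow>
    \<exists>Wx Wy. openin (compact_open_paths X) Wx \<and> openin (compact_open_paths X) Wy \<and>
      px \<in> Wx \<and> py \<in> Wy \<and> (\<forall>qx\<in>Wx. \<forall>qy\<in>Wy. reverse_join qx qy \<in> T)"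
  using T
proof induction
  case (Int a b)
  then have "reverse_join px py \<in> a" "reverse_join px py \<in> b" by simp_all
  obtain Ax Ay where "openin (compact_open_paths X) Ax" "openin (compact_open_paths X) Ay"
      "px \<in> Ax" "py \<in> Ay" "\<forall>qx\<in>Ax. \<forall>qy\<in>Ay. reverse_join qx qy \<in> a"
    using Int.IH(1)[OF \<open>reverse_join px py \<in> a\<close>] by blast
  moreover obtain Bx By where "openin (compact_open_paths X) Bx" "openin (compact_open_paths X) By"
      "px \<in> Bx" "py \<in> By" "\<forall>qx\<in>Bx. \<forall>qy\<in>By. reverse_join qx qy \<in> b"
    using Int.IH(2)[OF \<open>reverse_join px py \<in> b\<close>] by blast
  ultimately show ?case
    by (intro exI[of _ "Ax \<inter> Bx"] exI[of _ "Ay \<inter> By"] conjI openin_Int IntI ballI) auto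
next
  case (UN \<K>)
  then obtain k where k: "k \<in> \<K>" "reverse_join px py \<in> k" by blast
  then obtain Wx Wy where "openin (compact_open_paths X) Wx" "openin (compact_open_paths X) Wy"
      "px \<in> Wx" "py \<in> Wy" "\<forall>qx\<in>Wx. \<forall>qy\<in>Wy. reverse_join qx qy \<in> k"
    using UN.IH[OF k] by blast
  with k(1) show ?case
    by (intro exI[of _ Wx] exI[of _ Wy]) blast
next
  case (Basis s)
  then obtain K U where s: "s = {f. f ` K \<subseteq> U}" and "compactin euclideanreal K"
      and "K \<subseteq> {0..1}" and U: "openin X U"
    unfolding compact_open_subbasis_def by blast
  then have K: "compact K" "K \<subseteq> {0..1}" by simp_all
  from s Basis.prems have "reverse_join px py ` K \<subseteq> U" by simp
  from reverse_join_subbasic_continuous[OF K U px py start this] s show ?case by simp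
qed simp

lemma reverse_join_continuous:
  assumes W: "openin (compact_open_paths X) W"
    and px: "px \<in> paths X" and py: "py \<in> paths X" and start: "px 0 = py 0"
    and joined: "reverse_join px py \<in> W"
  obtains Wx Wy where "openin (compact_open_paths X) Wx" "openin (compact_open_paths X) Wy"
    "px \<in> Wx" "py \<in> Wy"
    "\<And>qx qy. qx \<in> Wx \<Longrightarrow> qy \<in> Wy \<Longrightarrow> qx 0 = qy 0 \<Longrightarrow> reverse_join qx qy \<in> W"
proof -
  obtain T where T: "generate_topology_on (compact_open_subbasis X) T" "W = T \<inter> paths X"
    using W unfolding compact_open_paths_eq openin_subtopology openin_topology_generated_by_iff
    by blast
  have "reverse_join px py \<in> T" using joined T(2) by simp
  from reverse_join_generated_continuous[OF T(1) px py start this]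
  obtain Wx Wy where "openin (compact_open_paths X) Wx" "openin (compact_open_paths X) Wy"
      "px \<in> Wx" "py \<in> Wy" "\<forall>qx\<in>Wx. \<forall>qy\<in>Wy. reverse_join qx qy \<in> T"
    by blast
  then show thesis
  proof (intro that)
    fix qx qy assume "qx \<in> Wx" "qy \<in> Wy" "qx 0 = qy 0"
    moreover have "Wx \<subseteq> paths X" "Wy \<subseteq> paths X"
      using \<open>openin (compact_open_paths X) Wx\<close> \<open>openin (compact_open_paths X) Wy\<close>
      by (simp_all add: openin_compact_open_paths_subset)
    ultimately have "reverse_join qx qy \<in> paths X" by (blast intro: reverse_join_paths)
    with \<open>qx \<in> Wx\<close> \<open>qy \<in> Wy\<close> \<open>\<forall>qx\<in>Wx. \<forall>qy\<in>Wy. reverse_join qx qy \<in> T\<close> T(2)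
    show "reverse_join qx qy \<in> W" by blast
  qed
qed

definition endpoint_movable :: "'a topology \<Rightarrow> 'a \<Rightarrow> (real \<Rightarrow> 'a) \<Rightarrow> bool" where
  "endpoint_movable X x0 p \<longleftrightarrow>
     (\<forall>\<U>. openin (based_paths_top X x0) \<U> \<and> p \<in> \<U> \<longrightarrow>
        (\<exists>V. openin X V \<and> p 1 \<in> V \<and> (\<forall>v\<in>V. \<exists>q\<in>\<U>. q 0 = x0 \<and> q 1 = v)))"

lemma endpoint_movableE:
  assumes "endpoint_movable X x0 p" and "p \<in> paths X" "p 0 = x0"
    and W: "openin (compact_open_paths X) W" "p \<in> W"
  obtains V where "openin X V" "p 1 \<in> V" "\<And>v. v \<in> V \<Longrightarrow> \<exists>q\<in>W. q 0 = x0 \<and> q 1 = v"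
proof -
  let ?\<U> = "W \<inter> {q \<in> paths X. q 0 = x0}"
  have "openin (based_paths_top X x0) ?\<U> \<and> p \<in> ?\<U>"
    using W \<open>p \<in> paths X\<close> \<open>p 0 = x0\<close> by (auto simp: openin_based_paths_top)
  then obtain V where "openin X V" "p 1 \<in> V" "\<forall>v\<in>V. \<exists>q\<in>?\<U>. q 0 = x0 \<and> q 1 = v"
    using assms(1) unfolding endpoint_movable_def by blast
  then show thesis by (intro that) blast+
qed

text \<open>Well-ended paths from x0 are endpoint-movable: a neighbourhood in P(X,x0) is the trace of
  one in P(X), and fixing the start point at x0 (which lies in the start neighbourhood V0)
  keeps the paths inside P(X,x0).\<close>
lemma well_ended_endpoint_movable:
  assumes "well_ended X p" and "p 0 = x0"
  shows "endpoint_movable X x0 p"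
  unfolding endpoint_movable_def
proof (intro allI impI)
  fix \<U> assume \<U>: "openin (based_paths_top X x0) \<U> \<and> p \<in> \<U>"
  then obtain W where W: "openin (compact_open_paths X) W" "\<U> = W \<inter> {q \<in> paths X. q 0 = x0}"
    unfolding openin_based_paths_top by (elim conjE exE)
  have "p \<in> W" using \<U> unfolding W(2) by simp
  obtain V0 V1 where V: "openin X V0" "openin X V1" "p 0 \<in> V0" "p 1 \<in> V1"
      "\<forall>a\<in>V0. \<forall>b\<in>V1. \<exists>q\<in>W. q 0 = a \<and> q 1 = b"
    using assms(1)[unfolded well_ended_def, rule_format, OF conjI[OF W(1) \<open>p \<in> W\<close>]] by blast
  have "\<exists>q\<in>\<U>. q 0 = x0 \<and> q 1 = v" if v: "v \<in> V1" for v
  proof -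
    have "x0 \<in> V0" using V(3) assms(2) by simp
    then obtain q where "q \<in> W" "q 0 = x0" "q 1 = v"
      using V(5) v by blast
    moreover have "q \<in> paths X"
      using \<open>q \<in> W\<close> openin_compact_open_paths_subset[OF W(1)] by blast
    ultimately show ?thesis unfolding W(2) by blast
  qed
  with V(2,4) show "\<exists>V. openin X V \<and> p 1 \<in> V \<and> (\<forall>v\<in>V. \<exists>q\<in>\<U>. q 0 = x0 \<and> q 1 = v)"
    by (intro exI[of _ V1]) simp
qed

text \<open>Reversing one endpoint-movable path and appending another gives a well-ended path: both
  ends can be moved, independently, by varying the two halves.\<close>
lemma reverse_join_well_ended:
  assumes px: "px \<in> paths X" "px 0 = x0" "endpoint_movable X x0 px"
    and py: "py \<in> paths X" "py 0 = x0" "endpoint_movable X x0 py"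
  shows "well_ended X (reverse_join px py)"
  unfolding well_ended_def
proof (intro allI impI)
  fix \<U> assume \<U>: "openin (compact_open_paths X) \<U> \<and> reverse_join px py \<in> \<U>"
  have "px 0 = py 0" using px(2) py(2) by simp
  obtain Wx Wy where W: "openin (compact_open_paths X) Wx" "openin (compact_open_paths X) Wy"
      "px \<in> Wx" "py \<in> Wy"
      "\<And>qx qy. qx \<in> Wx \<Longrightarrow> qy \<in> Wy \<Longrightarrow> qx 0 = qy 0 \<Longrightarrow> reverse_join qx qy \<in> \<U>"
    using reverse_join_continuous[OF conjunct1[OF \<U>] px(1) py(1) \<open>px 0 = py 0\<close> conjunct2[OF \<U>]]
    by blast
  obtain Vx where Vx: "openin X Vx" "px 1 \<in> Vx" "\<And>v. v \<in> Vx \<Longrightarrow> \<exists>q\<in>Wx. q 0 = x0 \<and> q 1 = v"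
    using endpoint_movableE[OF px(3,1,2) W(1,3)] by blast
  obtain Vy where Vy: "openin X Vy" "py 1 \<in> Vy" "\<And>v. v \<in> Vy \<Longrightarrow> \<exists>q\<in>Wy. q 0 = x0 \<and> q 1 = v"
    using endpoint_movableE[OF py(3,1,2) W(2,4)] by blast
  have "\<exists>q\<in>\<U>. q 0 = a \<and> q 1 = b" if "a \<in> Vx" "b \<in> Vy" for a b
  proof -
    obtain qx where "qx \<in> Wx" "qx 0 = x0" "qx 1 = a" using Vx(3) \<open>a \<in> Vx\<close> by blast
    moreover obtain qy where "qy \<in> Wy" "qy 0 = x0" "qy 1 = b" using Vy(3) \<open>b \<in> Vy\<close> by blast
    ultimately have "reverse_join qx qy \<in> \<U>" "reverse_join qx qy 0 = a" "reverse_join qx qy 1 = b"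
      using W(5) by simp_all
    then show ?thesis by blast
  qed
  with Vx(1,2) Vy(1,2) show "\<exists>V0 V1. openin X V0 \<and> openin X V1 \<and> reverse_join px py 0 \<in> V0 \<and>
      reverse_join px py 1 \<in> V1 \<and> (\<forall>a\<in>V0. \<forall>b\<in>V1. \<exists>q\<in>\<U>. q 0 = a \<and> q 1 = b)"
    by (intro exI[of _ Vx] exI[of _ Vy]) simp
qed

lemma wep_connected_iff_endpoint_movable:
  assumes "x0 \<in> topspace X"
  shows "wep_connected X \<longleftrightarrow>
    (\<forall>x\<in>topspace X. \<exists>p\<in>paths X. p 0 = x0 \<and> p 1 = x \<and> endpoint_movable X x0 p)"
proof
  assume wep: "wep_connected X"
  show "\<forall>x\<in>topspace X. \<exists>p\<in>paths X. p 0 = x0 \<and> p 1 = x \<and> endpoint_movable X x0 p"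
  proof
    fix x assume "x \<in> topspace X"
    then obtain p where p: "p \<in> paths X" "p 0 = x0" "p 1 = x" "well_ended X p"
      using wep assms unfolding wep_connected_def by blast
    with well_ended_endpoint_movable[OF p(4,2)]
    show "\<exists>p\<in>paths X. p 0 = x0 \<and> p 1 = x \<and> endpoint_movable X x0 p" by blast
  qed
next
  assume movable: "\<forall>x\<in>topspace X. \<exists>p\<in>paths X. p 0 = x0 \<and> p 1 = x \<and> endpoint_movable X x0 p"
  show "wep_connected X"
    unfolding wep_connected_def
  proof (intro ballI)
    fix x y assume "x \<in> topspace X" "y \<in> topspace X"
    obtain px where px: "px \<in> paths X" "px 0 = x0" "px 1 = x" "endpoint_movable X x0 px"
      using movable \<open>x \<in> topspace X\<close> by blast
    obtain py where py: "py \<in> paths X" "py 0 = x0" "py 1 = y" "endpoint_movable X x0 py"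
      using movable \<open>y \<in> topspace X\<close> by blast
    have "reverse_join px py \<in> paths X" "well_ended X (reverse_join px py)"
      using px py by (simp_all add: reverse_join_paths reverse_join_well_ended)
    with px(3) py(3) show "\<exists>p\<in>paths X. p 0 = x \<and> p 1 = y \<and> well_ended X p"
      by (intro bexI[of _ "reverse_join px py"]) simp_all
  qed
qed

theorem lemma4p15:
  fixes X :: "'a topology" and x0 :: 'a
  assumes "x0 \<in> topspace X"
  shows "wep_connected X \<longleftrightarrow>
    (\<forall>x\<in>topspace X. \<exists>p\<in>paths X. p 0 = x0 \<and> p 1 = x \<and>
       (\<forall>\<U>. openin (based_paths_top X x0) \<U> \<and> p \<in> \<U> \<longrightarrow>
          (\<exists>V. openin X V \<and> x \<in> V \<and> (\<forall>v\<in>V. \<exists>q\<in>\<U>. q 0 = x0 \<and> q 1 = v))))"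
proof -
  have "(p 1 = x \<and> (\<forall>\<U>. openin (based_paths_top X x0) \<U> \<and> p \<in> \<U> \<longrightarrow>
          (\<exists>V. openin X V \<and> x \<in> V \<and> (\<forall>v\<in>V. \<exists>q\<in>\<U>. q 0 = x0 \<and> q 1 = v))))
      \<longleftrightarrow> p 1 = x \<and> endpoint_movable X x0 p" for x p
    unfolding endpoint_movable_def by (intro conj_cong refl) simp
  with wep_connected_iff_endpoint_movable[OF assms] show ?thesis
    by (simp only:)
qed

end
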